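(* Let $L>0$, $g>0$, and let $\bar\rho=\bar\rho(x_3)\in L^\infty(\mathbb{R})$ satisfy $\bar\rho'\in C_0^\infty(\mathbb{R})$, $\inf_{\mathbb{R}}\bar\rho>0$ and $\bar\rho'(x_3^0)>0$ for some $x_3^0$. Let $M_{\mathrm c}$, $S(\xi)$, $|\xi|^M_{\mathrm{vc}}$ and $\mathbb{A}^{\mathrm g}$ be as defined in the context (for either the horizontal case $M\ne0$ or the vertical case $|M|\in(0,M_{\mathrm c})$). Then: (1) the set $\mathbb{A}^{\mathrm g}$ is symmetric with respect to the $x$-axis and with respect to the $y$-axis of $\mathbb{R}^2$; (2) countably infinitely many lattice points of $(L^{-1}\mathbb{Z})^2$ belong to $\mathbb{A}^{\mathrm g}$; (3) $\mathbb{A}^{\mathrm g}$ is a nonempty open subset of $\mathbb{R}^2$.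
   Context: All functions $\psi$ below are real-valued functions of $x_3\in\mathbb{R}$ and $'=d/dx_3$. $M_{\mathrm c}:=\sqrt{\sup_{\psi\in H^1(\mathbb{R}),\psi\not\equiv0}\int_{\mathbb{R}}g\bar\rho'\psi^2dx_3/\int_{\mathbb{R}}|\psi'|^2dx_3}\in(0,\infty]$. Horizontal case ($\bar{\mathbf M}=M\mathbf e_1$, $M\neq0$): for $\xi=(\xi_1,\xi_2)$ with $0<|M\xi_1|/|\xi|<M_{\mathrm c}$, $S(\xi):=\sqrt{\sup_{\psi\in H^1(\mathbb{R}),\psi\not\equiv0}\big(g|\xi|^2\int\bar\rho'\psi^2dx_3/(M\xi_1)^2-\int|\psi'|^2dx_3\big)/\int|\psi|^2dx_3}$, and $\mathbb{A}^{\mathrm g}:=\big(\{\xi\in\mathbb{R}^2: |\xi_1M|/|\xi|\in(0,M_{\mathrm c}),\ |\xi|<S(\xi)\}\cup\{\xi:\xi_1=0\}\big)\setminus\{\mathbf 0\}$. Vertical case ($\bar{\mathbf M}=M\mathbf e_3$, $|M|\in(0,M_{\mathrm c})$): with $\mathcal M_{\mathrm{vc}}:=\{\psi\in H^2(\mathbb{R}):\int_{\mathbb{R}}(g\bar\rho'\psi^2-M^2|\psi'|^2)dx_3>0\}$, $|\xi|^M_{\mathrm{vc}}:=\sqrt{\inf_{\psi\in\mathcal M_{\mathrm{vc}}}M^2\int|\psi''|^2dx_3/\int(g\bar\rho'\psi^2-M^2|\psi'|^2)dx_3}$ (a finite nonnegative constant), and $\mathbb{A}^{\mathrm g}:=\{\xi\in\mathbb{R}^2:|\xi|^M_{\mathrm{vc}}<|\xi|\}$.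 *)

theory Defs
  imports "HOL-Analysis.Analysis"
begin

definition test_fun :: "(real \<Rightarrow> real) \<Rightarrow> bool" where
  "test_fun \<phi> \<longleftrightarrow> (\<forall>n x. ((deriv ^^ n) \<phi>) differentiable (at x)) \<and>
                      (\<exists>R. \<forall>x. R < \<bar>x\<bar> \<longrightarrow> \<phi> x = 0)"

definition L2 :: "(real \<Rightarrow> real) \<Rightarrow> bool" where
  "L2 f \<longleftrightarrow> f \<in> borel_measurable lborel \<and> integrable lborel (\<lambda>x. (f x)\<^sup>2)"

definition weak_deriv :: "(real \<Rightarrow> real) \<Rightarrow> (real \<Rightarrow> real) \<Rightarrow> bool" where
  "weak_deriv f f' \<longleftrightarrow> (\<forall>\<phi>. test_fun \<phi> \<longrightarrow>
      integrable lborel (\<lambda>x. f x * deriv \<phi> x) \<and> integrable lborel (\<lambda>x. f' x * \<phi> x) \<and>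
      (\<integral>x. f x * deriv \<phi> x \<partial>lborel) = - (\<integral>x. f' x * \<phi> x \<partial>lborel))"

definition H1 :: "(real \<Rightarrow> real) \<Rightarrow> (real \<Rightarrow> real) \<Rightarrow> bool" where
  "H1 \<psi> \<psi>' \<longleftrightarrow> L2 \<psi> \<and> L2 \<psi>' \<and> weak_deriv \<psi> \<psi>'"

definition H2 :: "(real \<Rightarrow> real) \<Rightarrow> (real \<Rightarrow> real) \<Rightarrow> (real \<Rightarrow> real) \<Rightarrow> bool" where
  "H2 \<psi> \<psi>' \<psi>'' \<longleftrightarrow> H1 \<psi> \<psi>' \<and> H1 \<psi>' \<psi>''"

text \<open>Square of M_c, as an extended real (dr stands for the derivative of the density).\<close>
definition Mc_sq :: "real \<Rightarrow> (real \<Rightarrow> real) \<Rightarrow> ereal" where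
  "Mc_sq g dr = Sup {ereal ((\<integral>x. g * dr x * (\<psi> x)\<^sup>2 \<partial>lborel) / (\<integral>x. (\<psi>' x)\<^sup>2 \<partial>lborel)) |\<psi> \<psi>'.
                        H1 \<psi> \<psi>' \<and> \<not> (AE x in lborel. \<psi> x = 0)}"

definition Mc :: "real \<Rightarrow> (real \<Rightarrow> real) \<Rightarrow> ereal" where
  "Mc g dr = (if Mc_sq g dr = \<infinity> then \<infinity> else ereal (sqrt (real_of_ereal (Mc_sq g dr))))"

definition S_fun :: "real \<Rightarrow> (real \<Rightarrow> real) \<Rightarrow> real \<Rightarrow> real \<times> real \<Rightarrow> real" where
  "S_fun g dr M \<xi> = sqrt (Sup {((g * (norm \<xi>)\<^sup>2 * (\<integral>x. dr x * (\<psi> x)\<^sup>2 \<partial>lborel) / (M * fst \<xi>)\<^sup>2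
                                - (\<integral>x. (\<psi>' x)\<^sup>2 \<partial>lborel)) / (\<integral>x. (\<psi> x)\<^sup>2 \<partial>lborel)) |\<psi> \<psi>'.
                        H1 \<psi> \<psi>' \<and> \<not> (AE x in lborel. \<psi> x = 0)})"

text \<open>The set A^g in the horizontal case (background field M e_1).\<close>
definition Ag_hor :: "real \<Rightarrow> (real \<Rightarrow> real) \<Rightarrow> real \<Rightarrow> (real \<times> real) set" where
  "Ag_hor g dr M = ({\<xi>. 0 < \<bar>fst \<xi> * M\<bar> / norm \<xi> \<and> ereal (\<bar>fst \<xi> * M\<bar> / norm \<xi>) < Mc g dr
                        \<and> norm \<xi> < S_fun g dr M \<xi>} \<union> {\<xi>. fst \<xi> = 0}) - {0}"

definition xi_vc :: "real \<Rightarrow> (real \<Rightarrow> real) \<Rightarrow> real \<Rightarrow> real" where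
  "xi_vc g dr M = sqrt (Inf {M\<^sup>2 * (\<integral>x. (\<psi>'' x)\<^sup>2 \<partial>lborel) /
        (\<integral>x. g * dr x * (\<psi> x)\<^sup>2 - M\<^sup>2 * (\<psi>' x)\<^sup>2 \<partial>lborel) |\<psi> \<psi>' \<psi>''.
        H2 \<psi> \<psi>' \<psi>'' \<and> (\<integral>x. g * dr x * (\<psi> x)\<^sup>2 - M\<^sup>2 * (\<psi>' x)\<^sup>2 \<partial>lborel) > 0})"

text \<open>The set A^g in the vertical case (background field M e_3).\<close>
definition Ag_ver :: "real \<Rightarrow> (real \<Rightarrow> real) \<Rightarrow> real \<Rightarrow> (real \<times> real) set" where
  "Ag_ver g dr M = {\<xi>. xi_vc g dr M < norm \<xi>}"

definition Ag_props :: "real \<Rightarrow> (real \<times> real) set \<Rightarrow> bool" where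
  "Ag_props L A \<longleftrightarrow>
     (\<forall>a b. (a, b) \<in> A \<longrightarrow> (a, - b) \<in> A \<and> (- a, b) \<in> A) \<and>
     (let P = {\<xi> \<in> A. \<exists>m n :: int. \<xi> = (of_int m / L, of_int n / L)} in countable P \<and> infinite P) \<and>
     (A \<noteq> {} \<and> open A)"

end

theory Submission
  imports Defs
begin

text \<open>For the vertical field, A^g is the complement of a closed disc, so all three properties
  are immediate. For the horizontal field the point is
  openness. Off the axis xi_1 = 0, the condition |xi| < S(xi) unfolds through the supremum into
  the existence of a single profile psi with
  (|xi|^2 \<integral>psi^2 + \<integral>psi'^2) (M xi_1)^2 < g |xi|^2 \<integral>rho' psi^2,
  an open condition in xi; the supremum is finite because the quotient is at most
  g |xi|^2 sup|rho'| / (M xi_1)^2. The same union of open sets also covers the axis once some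
  psi has \<integral>rho' psi^2 > 0; a bump supported where rho' > 0 provides it and also shows
  M_c > 0, so the cone condition is open and contains the axis.\<close>

lemma integrable_vanishing_outside_interval:
  fixes f :: "real \<Rightarrow> real"
  assumes "continuous_on UNIV f" and "\<And>x. x \<notin> {a..b} \<Longrightarrow> f x = 0"
  shows "integrable lborel f"
proof -
  have "(\<lambda>x. indicat_real {a..b} x *\<^sub>R f x) = f"
    using assms(2) by (auto simp: indicator_def fun_eq_iff)
  moreover have "set_integrable lborel {a..b} f"
    unfolding set_integrable_def
    by (rule borel_integrable_compact) (auto intro: continuous_on_subset[OF assms(1)])
  ultimately show ?thesis by (simp add: set_integrable_def)
qed

lemma lborel_integral_vanishing_outside_interval:
  fixes f :: "real \<Rightarrow> real"
  assumes "continuous_on UNIV f" and "\<And>x. x \<notin> {a..b} \<Longrightarrow> f x = 0"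
  shows "(\<integral>x. f x \<partial>lborel) = integral {a..b} f"
proof -
  have "(\<lambda>x. indicat_real {a..b} x *\<^sub>R f x) = f"
    using assms(2) by (auto simp: indicator_def fun_eq_iff)
  moreover have "set_integrable lborel {a..b} f"
    unfolding set_integrable_def
    by (rule borel_integrable_compact) (auto intro: continuous_on_subset[OF assms(1)])
  ultimately show ?thesis
    using set_borel_integral_eq_integral(2) by (metis set_lebesgue_integral_def)
qed

lemma not_AE_eq_0_if_nonzero_on_interval:
  fixes f :: "real \<Rightarrow> real"
  assumes "a < b" and "\<And>x. x \<in> {a<..<b} \<Longrightarrow> f x \<noteq> 0"
  shows "\<not> (AE x in lborel. f x = 0)"
proof
  assume "AE x in lborel. f x = 0"
  then have "AE x in lborel. x \<notin> {a<..<b}"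
    by eventually_elim (use assms in auto)
  moreover have "(AE x in lborel. x \<notin> {a<..<b}) \<longleftrightarrow> emeasure lborel {a<..<b} = 0"
    by (rule AE_iff_measurable) auto
  ultimately show False using assms(1) by (simp add: emeasure_lborel_Ioo)
qed

lemma integral_pos_if_pos_on_interval:
  fixes f :: "real \<Rightarrow> real"
  assumes "integrable lborel f" and "\<And>x. 0 \<le> f x"
    and "a < b" and "\<And>x. x \<in> {a<..<b} \<Longrightarrow> 0 < f x"
  shows "0 < (\<integral>x. f x \<partial>lborel)"
proof -
  have "\<not> (AE x in lborel. f x = 0)"
    by (rule not_AE_eq_0_if_nonzero_on_interval[OF assms(3)]) (use assms(4) in force)
  then have "(\<integral>x. f x \<partial>lborel) \<noteq> 0"
    using integral_nonneg_eq_0_iff_AE[OF assms(1)] assms(2) by auto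
  moreover have "0 \<le> (\<integral>x. f x \<partial>lborel)" using assms(2) by simp
  ultimately show ?thesis by linarith
qed

lemma integral_square_pos_if_not_AE_zero:
  fixes \<psi> :: "real \<Rightarrow> real"
  assumes "L2 \<psi>" and "\<not> (AE x in lborel. \<psi> x = 0)"
  shows "0 < (\<integral>x. (\<psi> x)\<^sup>2 \<partial>lborel)"
proof -
  have "(\<integral>x. (\<psi> x)\<^sup>2 \<partial>lborel) \<noteq> 0"
    using assms integral_nonneg_eq_0_iff_AE[of lborel "\<lambda>x. (\<psi> x)\<^sup>2"] by (auto simp: L2_def)
  moreover have "0 \<le> (\<integral>x. (\<psi> x)\<^sup>2 \<partial>lborel)" by simp
  ultimately show ?thesis by linarith
qed

lemma weighted_integral_square_le:
  fixes \<psi> w :: "real \<Rightarrow> real"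
  assumes "L2 \<psi>" and "w \<in> borel_measurable lborel" and "\<And>x. \<bar>w x\<bar> \<le> B"
  shows "(\<integral>x. w x * (\<psi> x)\<^sup>2 \<partial>lborel) \<le> B * (\<integral>x. (\<psi> x)\<^sup>2 \<partial>lborel)"
proof -
  have \<psi>: "\<psi> \<in> borel_measurable lborel" "integrable lborel (\<lambda>x. (\<psi> x)\<^sup>2)"
    using assms(1) by (auto simp: L2_def)
  have "integrable lborel (\<lambda>x. w x * (\<psi> x)\<^sup>2)"
  proof (rule Bochner_Integration.integrable_bound)
    show "integrable lborel (\<lambda>x. B * (\<psi> x)\<^sup>2)" using \<psi> by simp
    show "(\<lambda>x. w x * (\<psi> x)\<^sup>2) \<in> borel_measurable lborel" using assms(2) \<psi> by measurable
    show "AE x in lborel. norm (w x * (\<psi> x)\<^sup>2) \<le> norm (B * (\<psi> x)\<^sup>2)"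
      using assms(3) by (auto simp: abs_mult intro!: mult_right_mono order.trans[OF _ abs_ge_self])
  qed
  then have "(\<integral>x. w x * (\<psi> x)\<^sup>2 \<partial>lborel) \<le> (\<integral>x. B * (\<psi> x)\<^sup>2 \<partial>lborel)"
    using \<psi> assms(3) by (intro integral_mono) (auto intro!: mult_right_mono simp: abs_le_iff)
  then show ?thesis by simp
qed

lemma test_fun_C1:
  assumes "test_fun \<phi>"
  shows "\<And>x. (\<phi> has_real_derivative deriv \<phi> x) (at x)"
    and "continuous_on UNIV \<phi>" and "continuous_on UNIV (deriv \<phi>)"
proof -
  have d: "\<And>n x. ((deriv ^^ n) \<phi>) differentiable (at x)"
    using assms unfolding test_fun_def by blast
  from d[of 0] show "\<And>x. (\<phi> has_real_derivative deriv \<phi> x) (at x)"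
    by (simp add: DERIV_deriv_iff_real_differentiable)
  from d[of 0] show "continuous_on UNIV \<phi>"
    by (simp add: continuous_at_imp_continuous_on differentiable_imp_continuous_within)
  from d[of 1] show "continuous_on UNIV (deriv \<phi>)"
    by (simp add: continuous_at_imp_continuous_on differentiable_imp_continuous_within)
qed

definition bump :: "real \<Rightarrow> real \<Rightarrow> real \<Rightarrow> real" where
  "bump x0 \<delta> x = (max 0 (\<delta>\<^sup>2 - (x - x0)\<^sup>2))\<^sup>2"

definition bump_deriv :: "real \<Rightarrow> real \<Rightarrow> real \<Rightarrow> real" where
  "bump_deriv x0 \<delta> x = -4 * (x - x0) * max 0 (\<delta>\<^sup>2 - (x - x0)\<^sup>2)"

lemma bump_cutoff_eq:
  fixes x x0 \<delta> :: real
  assumes "0 \<le> \<delta>"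
  shows "max 0 (\<delta>\<^sup>2 - (x - x0)\<^sup>2) = (if \<bar>x - x0\<bar> \<le> \<delta> then \<delta>\<^sup>2 - (x - x0)\<^sup>2 else 0)"
  using power2_le_iff_abs_le[OF assms, of "x - x0"] by auto

lemma bump_pos_iff:
  assumes "0 \<le> \<delta>"
  shows "0 < bump x0 \<delta> x \<longleftrightarrow> \<bar>x - x0\<bar> < \<delta>"
  using assms abs_le_square_iff[of \<delta> "x - x0"] by (auto simp: bump_def max_def)

lemma bump_vanishing_outside:
  fixes x :: real
  assumes "0 \<le> \<delta>" and "x \<notin> {x0 - \<delta>..x0 + \<delta>}"
  shows "bump x0 \<delta> x = 0" and "bump_deriv x0 \<delta> x = 0"
  using assms by (auto simp: bump_def bump_deriv_def bump_cutoff_eq)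

lemma continuous_on_bump: "continuous_on UNIV (bump x0 \<delta>)"
  and continuous_on_bump_deriv: "continuous_on UNIV (bump_deriv x0 \<delta>)"
  unfolding bump_def[abs_def] bump_deriv_def[abs_def] by (intro continuous_intros)+

lemma weak_deriv_bump:
  assumes "0 < \<delta>"
  shows "weak_deriv (bump x0 \<delta>) (bump_deriv x0 \<delta>)"
  unfolding weak_deriv_def
proof (intro allI impI conjI)
  fix \<phi> assume "test_fun \<phi>"
  note \<phi> = test_fun_C1[OF this]
  define a b where "a = x0 - \<delta>" and "b = x0 + \<delta>"
  define f where "f x = bump x0 \<delta> x * deriv \<phi> x + bump_deriv x0 \<delta> x * \<phi> x" for x
  have vanish: "bump x0 \<delta> x = 0" "bump_deriv x0 \<delta> x = 0" if "x \<notin> {a..b}" for x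
    using bump_vanishing_outside assms that by (auto simp: a_def b_def)
  have cont1: "continuous_on UNIV (\<lambda>x. bump x0 \<delta> x * deriv \<phi> x)"
    and cont2: "continuous_on UNIV (\<lambda>x. bump_deriv x0 \<delta> x * \<phi> x)"
    by (intro continuous_intros continuous_on_bump continuous_on_bump_deriv \<phi>)+
  show int1: "integrable lborel (\<lambda>x. bump x0 \<delta> x * deriv \<phi> x)"
    using cont1 by (rule integrable_vanishing_outside_interval[of _ a b]) (simp add: vanish)
  show int2: "integrable lborel (\<lambda>x. bump_deriv x0 \<delta> x * \<phi> x)"
    using cont2 by (rule integrable_vanishing_outside_interval[of _ a b]) (simp add: vanish)
  have "(f has_integral 0) {a..b}"
  proof -
    define F where "F x = (\<delta>\<^sup>2 - (x - x0)\<^sup>2)\<^sup>2 * \<phi> x" for x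
    define F' where "F' x = 2 * (\<delta>\<^sup>2 - (x - x0)\<^sup>2) * (- (2 * (x - x0))) * \<phi> x
                          + (\<delta>\<^sup>2 - (x - x0)\<^sup>2)\<^sup>2 * deriv \<phi> x" for x
    have "(F has_real_derivative F' x) (at x)" for x
      unfolding F_def F'_def by (rule derivative_eq_intros \<phi>(1) refl | simp)+
    then have "(F' has_integral F b - F a) {a..b}"
      using assms
      by (intro fundamental_theorem_of_calculus)
         (auto simp: a_def b_def has_real_derivative_iff_has_vector_derivative[symmetric]
               intro: has_field_derivative_at_within)
    moreover have "F b - F a = 0" by (simp add: F_def a_def b_def)
    moreover have "F' x = f x" if "x \<in> {a..b}" for x
    proof -
      have "\<bar>x - x0\<bar> \<le> \<delta>" using that by (auto simp: a_def b_def)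
      then have "max 0 (\<delta>\<^sup>2 - (x - x0)\<^sup>2) = \<delta>\<^sup>2 - (x - x0)\<^sup>2"
        using assms by (simp add: bump_cutoff_eq)
      then show ?thesis
        unfolding F'_def f_def bump_def bump_deriv_def by (simp add: algebra_simps power2_eq_square)
    qed
    ultimately show ?thesis by (metis (no_types, lifting) has_integral_eq)
  qed
  moreover have "(\<integral>x. f x \<partial>lborel) = integral {a..b} f"
    by (rule lborel_integral_vanishing_outside_interval)
       (use cont1 cont2 in \<open>auto simp: f_def vanish intro: continuous_on_add\<close>)
  ultimately have "(\<integral>x. f x \<partial>lborel) = 0" by (simp add: integral_unique)
  then show "(\<integral>x. bump x0 \<delta> x * deriv \<phi> x \<partial>lborel) = - (\<integral>x. bump_deriv x0 \<delta> x * \<phi> x \<partial>lborel)"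
    using int1 int2 by (simp add: f_def)
qed

lemma H1_bump:
  assumes "0 < \<delta>"
  shows "H1 (bump x0 \<delta>) (bump_deriv x0 \<delta>)"
proof -
  have vanish: "bump x0 \<delta> x = 0" "bump_deriv x0 \<delta> x = 0" if "x \<notin> {x0 - \<delta>..x0 + \<delta>}" for x
    using bump_vanishing_outside assms that by auto
  have "L2 f" if "continuous_on UNIV f" "\<And>x. x \<notin> {x0 - \<delta>..x0 + \<delta>} \<Longrightarrow> f x = 0" for f
    unfolding L2_def using that
    by (auto intro!: integrable_vanishing_outside_interval[of _ "x0 - \<delta>" "x0 + \<delta>"] continuous_intros
             simp: borel_measurable_continuous_onI)
  then show ?thesis
    using weak_deriv_bump[OF assms] continuous_on_bump continuous_on_bump_deriv vanish
    by (simp add: H1_def)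
qed

lemma exists_H1_weighted_energy_pos:
  fixes w :: "real \<Rightarrow> real"
  assumes "continuous_on UNIV w" and "0 < w x0"
  obtains \<psi> \<psi>' where "H1 \<psi> \<psi>'" and "\<not> (AE x in lborel. \<psi> x = 0)"
    and "0 < (\<integral>x. w x * (\<psi> x)\<^sup>2 \<partial>lborel)" and "0 < (\<integral>x. (\<psi>' x)\<^sup>2 \<partial>lborel)"
proof -
  have "open {x. 0 < w x}" by (rule open_Collect_less) (auto intro: assms(1))
  then obtain \<delta> where \<delta>: "0 < \<delta>" and "ball x0 \<delta> \<subseteq> {x. 0 < w x}"
    using assms(2) openE[of "{x. 0 < w x}" x0] by auto
  then have w_pos: "0 < w x" if "\<bar>x - x0\<bar> < \<delta>" for x
    using that by (auto simp: dist_real_def abs_minus_commute)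
  define a b where "a = x0 - \<delta>" and "b = x0 + \<delta>"
  have ab: "a < b" and x0b: "x0 < b" using \<delta> by (auto simp: a_def b_def)
  have pos_inside: "0 < bump x0 \<delta> x" if "x \<in> {a<..<b}" for x
    using that \<delta> by (auto simp: bump_pos_iff a_def b_def)
  have vanish: "bump x0 \<delta> x = 0" "bump_deriv x0 \<delta> x = 0" if "x \<notin> {a..b}" for x
    using bump_vanishing_outside \<delta> that by (auto simp: a_def b_def)
  show ?thesis
  proof
    show "H1 (bump x0 \<delta>) (bump_deriv x0 \<delta>)" using \<delta> by (rule H1_bump)
    show "\<not> (AE x in lborel. bump x0 \<delta> x = 0)"
      using ab by (rule not_AE_eq_0_if_nonzero_on_interval) (use pos_inside in force)
    show "0 < (\<integral>x. w x * (bump x0 \<delta> x)\<^sup>2 \<partial>lborel)"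
    proof (rule integral_pos_if_pos_on_interval[OF _ _ ab])
      show "integrable lborel (\<lambda>x. w x * (bump x0 \<delta> x)\<^sup>2)"
        by (rule integrable_vanishing_outside_interval[of _ a b])
           (auto intro!: continuous_intros assms(1) continuous_on_bump simp: vanish)
      show "0 \<le> w x * (bump x0 \<delta> x)\<^sup>2" for x
      proof (cases "\<bar>x - x0\<bar> < \<delta>")
        case True
        then show ?thesis using w_pos[of x] by simp
      next
        case False
        then have "bump x0 \<delta> x = 0" using bump_pos_iff[of \<delta> x0 x] \<delta> by (simp add: bump_def)
        then show ?thesis by simp
      qed
      show "0 < w x * (bump x0 \<delta> x)\<^sup>2" if "x \<in> {a<..<b}" for x
        using pos_inside[OF that] w_pos[of x] that by (auto simp: a_def b_def)
    qed
    show "0 < (\<integral>x. (bump_deriv x0 \<delta> x)\<^sup>2 \<partial>lborel)"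
    proof (rule integral_pos_if_pos_on_interval[OF _ _ x0b])
      show "integrable lborel (\<lambda>x. (bump_deriv x0 \<delta> x)\<^sup>2)"
        by (rule integrable_vanishing_outside_interval[of _ a b])
           (auto intro!: continuous_intros continuous_on_bump_deriv simp: vanish)
      show "0 < (bump_deriv x0 \<delta> x)\<^sup>2" if "x \<in> {x0<..<b}" for x
      proof -
        have "0 < x - x0" and "0 < bump x0 \<delta> x" using that pos_inside[of x] by (auto simp: a_def b_def)
        then show ?thesis by (auto simp: bump_def bump_deriv_def)
      qed
    qed simp
  qed
qed

lemma Mc_pos:
  assumes "0 < g" and "H1 \<psi> \<psi>'" and "\<not> (AE x in lborel. \<psi> x = 0)"
    and "0 < (\<integral>x. w x * (\<psi> x)\<^sup>2 \<partial>lborel)" and "0 < (\<integral>x. (\<psi>' x)\<^sup>2 \<partial>lborel)"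
  shows "0 < Mc g w"
proof -
  have "(\<integral>x. g * w x * (\<psi> x)\<^sup>2 \<partial>lborel) = g * (\<integral>x. w x * (\<psi> x)\<^sup>2 \<partial>lborel)"
    by (simp add: mult.assoc)
  then have "0 < (\<integral>x. g * w x * (\<psi> x)\<^sup>2 \<partial>lborel) / (\<integral>x. (\<psi>' x)\<^sup>2 \<partial>lborel)"
    using assms(1,4,5) by simp
  also have "ereal \<dots> \<le> Mc_sq g w"
    unfolding Mc_sq_def by (rule Sup_upper) (use assms(2,3) in blast)
  finally have "0 < Mc_sq g w" by (simp add: zero_ereal_def)
  then show ?thesis by (cases "Mc_sq g w") (auto simp: Mc_def)
qed

lemma less_S_fun_iff:
  fixes w :: "real \<Rightarrow> real" and \<xi> :: "real \<times> real"
  assumes "0 \<le> g" and "M * fst \<xi> \<noteq> 0"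
    and "w \<in> borel_measurable lborel" and "\<And>x. \<bar>w x\<bar> \<le> B"
    and "H1 \<psi>0 \<psi>0'" and "\<not> (AE x in lborel. \<psi>0 x = 0)"
  shows "norm \<xi> < S_fun g w M \<xi> \<longleftrightarrow>
    (\<exists>\<psi> \<psi>'. H1 \<psi> \<psi>' \<and> \<not> (AE x in lborel. \<psi> x = 0) \<and>
      ((norm \<xi>)\<^sup>2 * (\<integral>x. (\<psi> x)\<^sup>2 \<partial>lborel) + (\<integral>x. (\<psi>' x)\<^sup>2 \<partial>lborel)) * (M * fst \<xi>)\<^sup>2
        < g * (norm \<xi>)\<^sup>2 * (\<integral>x. w x * (\<psi> x)\<^sup>2 \<partial>lborel))"
proof -
  define n q where "n = norm \<xi>" and "q = (M * fst \<xi>)\<^sup>2"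
  define R where "R \<psi> \<psi>' = (g * n\<^sup>2 * (\<integral>x. w x * (\<psi> x)\<^sup>2 \<partial>lborel) / q
      - (\<integral>x. (\<psi>' x)\<^sup>2 \<partial>lborel)) / (\<integral>x. (\<psi> x)\<^sup>2 \<partial>lborel)" for \<psi> \<psi>' :: "real \<Rightarrow> real"
  define X where "X = {R \<psi> \<psi>' |\<psi> \<psi>'. H1 \<psi> \<psi>' \<and> \<not> (AE x in lborel. \<psi> x = 0)}"
  have q: "0 < q" using assms(2) by (simp add: q_def)
  have S: "S_fun g w M \<xi> = sqrt (Sup X)" by (simp add: S_fun_def X_def R_def n_def q_def)
  have R_less_iff: "n\<^sup>2 < R \<psi> \<psi>' \<longleftrightarrow>
      (n\<^sup>2 * (\<integral>x. (\<psi> x)\<^sup>2 \<partial>lborel) + (\<integral>x. (\<psi>' x)\<^sup>2 \<partial>lborel)) * q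
        < g * n\<^sup>2 * (\<integral>x. w x * (\<psi> x)\<^sup>2 \<partial>lborel)"
    if "H1 \<psi> \<psi>'" "\<not> (AE x in lborel. \<psi> x = 0)" for \<psi> \<psi>'
  proof -
    have "0 < (\<integral>x. (\<psi> x)\<^sup>2 \<partial>lborel)"
      using that by (auto intro: integral_square_pos_if_not_AE_zero simp: H1_def)
    then show ?thesis using q by (simp add: R_def field_simps)
  qed
  have R_le: "R \<psi> \<psi>' \<le> g * n\<^sup>2 / q * B"
    if "H1 \<psi> \<psi>'" "\<not> (AE x in lborel. \<psi> x = 0)" for \<psi> \<psi>'
  proof -
    have L2: "L2 \<psi>" using that(1) by (simp add: H1_def)
    have N: "0 < (\<integral>x. (\<psi> x)\<^sup>2 \<partial>lborel)"
      using L2 that(2) by (rule integral_square_pos_if_not_AE_zero)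
    have "R \<psi> \<psi>' \<le> g * n\<^sup>2 / q * (\<integral>x. w x * (\<psi> x)\<^sup>2 \<partial>lborel) / (\<integral>x. (\<psi> x)\<^sup>2 \<partial>lborel)"
      unfolding R_def using N by (intro divide_right_mono) auto
    also have "\<dots> \<le> g * n\<^sup>2 / q * (B * (\<integral>x. (\<psi> x)\<^sup>2 \<partial>lborel)) / (\<integral>x. (\<psi> x)\<^sup>2 \<partial>lborel)"
      using weighted_integral_square_le[OF L2 assms(3,4)] assms(1) q N
      by (intro divide_right_mono mult_left_mono) auto
    also have "\<dots> = g * n\<^sup>2 / q * B" using N by simp
    finally show ?thesis .
  qed
  have "X \<noteq> {}" using assms(5,6) by (auto simp: X_def)
  moreover have "bdd_above X" using R_le by (auto simp: X_def bdd_above_def)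
  moreover have "n < sqrt (Sup X) \<longleftrightarrow> n\<^sup>2 < Sup X"
    using real_sqrt_less_iff[of "n\<^sup>2" "Sup X"] by (simp add: n_def)
  ultimately show ?thesis
    using R_less_iff by (auto simp: S less_cSup_iff X_def n_def q_def)
qed

lemma mem_Ag_hor_iff:
  fixes w :: "real \<Rightarrow> real"
  assumes "0 < g" and "M \<noteq> 0" and "0 < Mc g w"
    and "w \<in> borel_measurable lborel" and "\<And>x. \<bar>w x\<bar> \<le> B"
    and "H1 \<psi>0 \<psi>0'" and "\<not> (AE x in lborel. \<psi>0 x = 0)"
    and "0 < (\<integral>x. w x * (\<psi>0 x)\<^sup>2 \<partial>lborel)"
  shows "\<xi> \<in> Ag_hor g w M \<longleftrightarrow> \<xi> \<noteq> 0 \<and> ereal (\<bar>fst \<xi> * M\<bar> / norm \<xi>) < Mc g w \<and>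
    (\<exists>\<psi> \<psi>'. H1 \<psi> \<psi>' \<and> \<not> (AE x in lborel. \<psi> x = 0) \<and>
      ((norm \<xi>)\<^sup>2 * (\<integral>x. (\<psi> x)\<^sup>2 \<partial>lborel) + (\<integral>x. (\<psi>' x)\<^sup>2 \<partial>lborel)) * (M * fst \<xi>)\<^sup>2
        < g * (norm \<xi>)\<^sup>2 * (\<integral>x. w x * (\<psi> x)\<^sup>2 \<partial>lborel))"
proof (cases "fst \<xi> = 0")
  case True
  then show ?thesis
    using assms(1,3,6,7,8) by (auto simp: Ag_hor_def zero_ereal_def[symmetric])
next
  case False
  then show ?thesis
    using less_S_fun_iff[of g M \<xi> w B \<psi>0 \<psi>0'] assms by (auto simp: Ag_hor_def)
qed

lemma open_Collect_nonzero_ereal_less: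
  fixes f :: "'a::real_normed_vector \<Rightarrow> real"
  assumes "continuous_on (- {0}) f"
  shows "open {x. x \<noteq> 0 \<and> ereal (f x) < m}"
proof -
  have "continuous_on (- {0}) (\<lambda>x. ereal (f x))"
    using assms by (rule continuous_on_ereal)
  moreover have "open (- {0::'a})" by (simp add: open_Compl)
  ultimately have "open ((\<lambda>x. ereal (f x)) -` {..<m} \<inter> - {0})"
    using continuous_on_open_vimage open_lessThan by blast
  moreover have "(\<lambda>x. ereal (f x)) -` {..<m} \<inter> - {0} = {x. x \<noteq> 0 \<and> ereal (f x) < m}"
    by auto
  ultimately show ?thesis by simp
qed

lemma open_Ag_hor:
  fixes w :: "real \<Rightarrow> real"
  assumes "0 < g" and "M \<noteq> 0" and "0 < Mc g w"
    and "w \<in> borel_measurable lborel" and "\<And>x. \<bar>w x\<bar> \<le> B"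
    and "H1 \<psi>0 \<psi>0'" and "\<not> (AE x in lborel. \<psi>0 x = 0)"
    and "0 < (\<integral>x. w x * (\<psi>0 x)\<^sup>2 \<partial>lborel)"
  shows "open (Ag_hor g w M)"
proof -
  define V where "V \<psi> \<psi>' = {\<xi>::real \<times> real.
      ((norm \<xi>)\<^sup>2 * (\<integral>x. (\<psi> x)\<^sup>2 \<partial>lborel) + (\<integral>x. (\<psi>' x)\<^sup>2 \<partial>lborel)) * (M * fst \<xi>)\<^sup>2
        < g * (norm \<xi>)\<^sup>2 * (\<integral>x. w x * (\<psi> x)\<^sup>2 \<partial>lborel)}" for \<psi> \<psi>' :: "real \<Rightarrow> real"
  have "Ag_hor g w M = {\<xi>. \<xi> \<noteq> 0 \<and> ereal (\<bar>fst \<xi> * M\<bar> / norm \<xi>) < Mc g w} \<inter>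
      (\<Union>(\<psi>, \<psi>') \<in> {(\<psi>, \<psi>'). H1 \<psi> \<psi>' \<and> \<not> (AE x in lborel. \<psi> x = 0)}. V \<psi> \<psi>')"
    using mem_Ag_hor_iff[OF assms] by (auto simp: V_def)
  moreover have "open {\<xi>::real \<times> real. \<xi> \<noteq> 0 \<and> ereal (\<bar>fst \<xi> * M\<bar> / norm \<xi>) < Mc g w}"
    by (rule open_Collect_nonzero_ereal_less) (intro continuous_intros; simp)
  moreover have "open (V \<psi> \<psi>')" for \<psi> \<psi>'
    unfolding V_def by (rule open_Collect_less) (intro continuous_intros)+
  ultimately show ?thesis by (auto intro!: open_Int open_UN split: prod.split)
qed

lemma Ag_propsI:
  fixes A :: "(real \<times> real) set" and i j :: int
  assumes "0 < L" and "\<And>a b. (a, b) \<in> A \<Longrightarrow> (a, - b) \<in> A \<and> (- a, b) \<in> A" and "open A"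
    and "(i, j) \<noteq> (0, 0)" and "\<And>t. c < t \<Longrightarrow> (t * of_int i, t * of_int j) \<in> A"
  shows "Ag_props L A"
  unfolding Ag_props_def Let_def
proof (intro conjI)
  let ?P = "{\<xi> \<in> A. \<exists>m n :: int. \<xi> = (of_int m / L, of_int n / L)}"
  have "?P \<subseteq> (\<lambda>(m, n). (of_int m / L, of_int n / L)) ` UNIV" by auto
  then show "countable ?P" by (rule countable_subset) simp
  define f where "f n = (of_int n / L * of_int i, of_int n / L * of_int j)" for n :: int
  define N where "N = \<lceil>\<bar>c\<bar> * L\<rceil>"
  have "f n \<in> ?P" if "N < n" for n
  proof -
    have "\<bar>c\<bar> * L < of_int n" using that by (simp add: N_def ceiling_less_iff)
    moreover have "c * L \<le> \<bar>c\<bar> * L" using assms(1) by (simp add: mult_right_mono)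
    ultimately have "c * L < of_int n" by linarith
    then have "c < of_int n / L" using assms(1) by (simp add: pos_less_divide_eq)
    then have "f n \<in> A" unfolding f_def by (rule assms(5))
    moreover have "f n = (of_int (n * i) / L, of_int (n * j) / L)" by (simp add: f_def)
    ultimately show ?thesis by blast
  qed
  then have "f ` {N<..} \<subseteq> ?P" by auto
  moreover have "inj f" using assms(1,4) by (auto simp: inj_on_def f_def)
  ultimately show "infinite ?P"
    by (meson finite_imageD finite_subset infinite_Ioi inj_on_subset subset_UNIV)
  have "(\<bar>c\<bar> + 1) * of_int i \<in> fst ` A" using assms(5)[of "\<bar>c\<bar> + 1"] by force
  then show "A \<noteq> {}" by auto
qed (use assms(2,3) in auto)

lemma Ag_hor_reflect:
  assumes "(a, b) \<in> Ag_hor g w M"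
  shows "(a, - b) \<in> Ag_hor g w M \<and> (- a, b) \<in> Ag_hor g w M"
  using assms by (auto simp: Ag_hor_def S_fun_def norm_Pair zero_prod_def)

lemma bounded_if_continuous_compact_support:
  fixes w :: "real \<Rightarrow> real"
  assumes "continuous_on UNIV w" and "\<And>x. R < \<bar>x\<bar> \<Longrightarrow> w x = 0"
  obtains B where "\<And>x. \<bar>w x\<bar> \<le> B"
proof -
  have "compact (w ` cball 0 \<bar>R\<bar>)"
    by (rule compact_continuous_image) (auto intro: continuous_on_subset[OF assms(1)])
  then obtain B where B: "\<And>y. y \<in> w ` cball 0 \<bar>R\<bar> \<Longrightarrow> \<bar>y\<bar> \<le> B"
    using compact_imp_bounded bounded_real by metis
  have "\<bar>w x\<bar> \<le> max B 0" for x
    using B[of "w x"] assms(2)[of x] by (cases "\<bar>x\<bar> \<le> \<bar>R\<bar>") auto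
  then show ?thesis using that by blast
qed

theorem proposition2p3:
  fixes L g M :: real and rho rho' :: "real \<Rightarrow> real" and x30 :: real
  assumes "L > 0" and "g > 0"
    and "rho \<in> borel_measurable lborel" and "bounded (range rho)"
    and "\<And>x. (rho has_real_derivative rho' x) (at x)"
    and "\<forall>n x. ((deriv ^^ n) rho') differentiable (at x)"
    and "\<exists>R. \<forall>x. R < \<bar>x\<bar> \<longrightarrow> rho' x = 0"
    and "(INF x. rho x) > 0"
    and "rho' x30 > 0"
  shows "(M \<noteq> 0 \<longrightarrow> Ag_props L (Ag_hor g rho' M)) \<and>
         (0 < \<bar>M\<bar> \<and> ereal \<bar>M\<bar> < Mc g rho' \<longrightarrow> Ag_props L (Ag_ver g rho' M))"
proof (intro conjI impI)
  show "Ag_props L (Ag_ver g rho' M)"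
    unfolding Ag_ver_def
    by (rule Ag_propsI[OF assms(1), where i = 1 and j = 0 and c = "xi_vc g rho' M"])
       (auto simp: norm_Pair intro!: open_Collect_less continuous_intros)
next
  assume M: "M \<noteq> 0"
  have cont: "continuous_on UNIV rho'"
    using spec[OF assms(6), of 0]
    by (auto intro!: continuous_at_imp_continuous_on differentiable_imp_continuous_within)
  then have meas: "rho' \<in> borel_measurable lborel" by (simp add: borel_measurable_continuous_onI)
  obtain B where B: "\<And>x. \<bar>rho' x\<bar> \<le> B"
    using assms(7) bounded_if_continuous_compact_support[OF cont] by blast
  obtain \<psi> \<psi>' where \<psi>: "H1 \<psi> \<psi>'" "\<not> (AE x in lborel. \<psi> x = 0)"
    and pos: "0 < (\<integral>x. rho' x * (\<psi> x)\<^sup>2 \<partial>lborel)" "0 < (\<integral>x. (\<psi>' x)\<^sup>2 \<partial>lborel)"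
    using exists_H1_weighted_energy_pos[OF cont assms(9)] by blast
  have "0 < Mc g rho'" using Mc_pos[OF assms(2) \<psi> pos] .
  then have "open (Ag_hor g rho' M)"
    using open_Ag_hor[OF assms(2) M _ meas B \<psi> pos(1)] by blast
  show "Ag_props L (Ag_hor g rho' M)"
  proof (rule Ag_propsI[OF assms(1), where i = 0 and j = 1 and c = 0])
    show "(t * of_int 0, t * of_int 1) \<in> Ag_hor g rho' M" if "0 < t" for t
      using that by (simp add: Ag_hor_def zero_prod_def)
  qed (use Ag_hor_reflect \<open>open (Ag_hor g rho' M)\<close> in auto)
qed

end
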